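(* Let $A, B \in M_n(\mathbb{C})$. Assume that $\mathrm{Sp}(kA+B) \subset \mathbb{Z}$ for every $k \in \mathbb{N}$. Then the pair $(A,B)$ has property L.
   Context: $\mathbb{N}$ is the set of non-negative integers; $\mathrm{Sp}(M)$ is the set of eigenvalues of $M$. A pair $(A,B) \in M_n(\mathbb{C})^2$ has property L if there exist $n$ linear forms $f_1,\dots,f_n$ on $\mathbb{C}^2$ such that for all $(x,y) \in \mathbb{C}^2$, the characteristic polynomial of $xA+yB$ equals $\prod_{k=1}^n (X - f_k(x,y))$. Equivalently, there exist affine maps $g_1,\dots,g_n:\mathbb{C}\to\mathbb{C}$ with $\chi_{A+zB}(X)=\prod_{k=1}^n (X-g_k(z))$ for all $z \in \mathbb{C}$. *)

theory Defs
  imports "Jordan_Normal_Form.Spectral_Radius"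
begin

definition property_L :: "nat \<Rightarrow> complex mat \<Rightarrow> complex mat \<Rightarrow> bool" where
  "property_L n A B \<longleftrightarrow>
     (\<exists>a b :: nat \<Rightarrow> complex. \<forall>x y :: complex.
        char_poly (x \<cdot>\<^sub>m A + y \<cdot>\<^sub>m B) = (\<Prod>k<n. [: - (a k * x + b k * y), 1 :]))"

end

theory Submission
  imports Defs "HOL-Computational_Algebra.Primes"
begin

text \<open>
  Write \<chi>(z, X) for the characteristic polynomial of the pencil z A + B, viewed as a polynomial
  in X with coefficients in \<complex>[z].  By hypothesis every specialisation \<chi>(k, X), k \<in> \<nat>, splits
  into n linear factors with integer roots, and an elementary eigenvalue bound shows that these
  roots grow at most linearly in k.  For a large prime p and a root l of \<chi>(p, X), the
  polynomial g(z) = \<chi>(z, l) takes integer values at the naturals and has degree below p, so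
  Newton's forward difference formula gives g(p) \<equiv> g(0) (mod p).  Since g(p) = 0, l is
  congruent modulo p to a root \<mu> of \<chi>(0, X); writing l = \<mu> + c p, the growth bound confines
  (c, \<mu>) to a finite box.  A pigeonhole argument over infinitely many primes then shows that
  X - (\<mu> + c z) divides \<chi>, and induction yields
  \<chi>(z, X) = \<Prod>_i (X - (\<mu>_i + c_i z)).  Homogeneity of the characteristic polynomial finally
  turns this affine factorisation into property L.
\<close>

section \<open>Forward differences and a congruence for integer-valued polynomials\<close>

definition fdiff :: "(nat \<Rightarrow> 'a::ab_group_add) \<Rightarrow> nat \<Rightarrow> 'a" where
  "fdiff f k = f (Suc k) - f k"

lemma pascal_sum:
  fixes a :: "nat \<Rightarrow> 'a::comm_semiring_1"
  shows "(\<Sum>i\<le>Suc k. of_nat (Suc k choose i) * a i)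
       = (\<Sum>i\<le>k. of_nat (k choose i) * a i) + (\<Sum>i\<le>k. of_nat (k choose i) * a (Suc i))"
proof -
  have first_term:
    "a 0 + (\<Sum>i\<le>k. of_nat (k choose Suc i) * a (Suc i)) = (\<Sum>i\<le>k. of_nat (k choose i) * a i)"
  proof -
    have "(\<Sum>i\<le>Suc k. of_nat (k choose i) * a i) = a 0 + (\<Sum>i\<le>k. of_nat (k choose Suc i) * a (Suc i))"
      by (subst sum.atMost_Suc_shift) simp
    then show ?thesis by (simp add: binomial_eq_0)
  qed
  have "(\<Sum>i\<le>Suc k. of_nat (Suc k choose i) * a i)
      = a 0 + (\<Sum>i\<le>k. of_nat (Suc k choose Suc i) * a (Suc i))"
    by (subst sum.atMost_Suc_shift) simp
  also have "\<dots> = (a 0 + (\<Sum>i\<le>k. of_nat (k choose Suc i) * a (Suc i)))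
                   + (\<Sum>i\<le>k. of_nat (k choose i) * a (Suc i))"
    by (simp add: sum.distrib algebra_simps)
  finally show ?thesis unfolding first_term .
qed

lemma newton_forward:
  fixes f :: "nat \<Rightarrow> 'a::comm_ring_1"
  shows "f k = (\<Sum>i\<le>k. of_nat (k choose i) * (fdiff ^^ i) f 0)"
proof (induction k arbitrary: f)
  case 0
  show ?case by simp
next
  case (Suc k)
  have shift: "(fdiff ^^ i) (fdiff f) = (fdiff ^^ Suc i) f" for i
    by (simp add: funpow_Suc_right del: funpow.simps)
  have "f (Suc k) = f k + fdiff f k" by (simp add: fdiff_def)
  also have "\<dots> = (\<Sum>i\<le>k. of_nat (k choose i) * (fdiff ^^ i) f 0)
                 + (\<Sum>i\<le>k. of_nat (k choose i) * (fdiff ^^ Suc i) f 0)"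
    using Suc[of f] Suc[of "fdiff f"] by (simp only: shift)
  also have "\<dots> = (\<Sum>i\<le>Suc k. of_nat (Suc k choose i) * (fdiff ^^ i) f 0)"
    by (rule pascal_sum[symmetric])
  finally show ?case .
qed

definition pdiff :: "'a::comm_ring_1 poly \<Rightarrow> 'a poly" where
  "pdiff g = pcompose g [:1, 1:] - g"

lemma poly_pdiff: "poly (pdiff g) x = poly g (x + 1) - poly g x"
  by (simp add: pdiff_def poly_pcompose algebra_simps)

lemma degree_pdiff_less:
  fixes g :: "'a::idom poly"
  assumes "pdiff g \<noteq> 0"
  shows "degree (pdiff g) < degree g"
proof -
  have deg: "degree (pcompose g [:1, 1:]) = degree g"
    by simp
  have lead: "coeff (pcompose g [:1, 1:]) (degree g) = lead_coeff g"
    using lead_coeff_comp[of "[:1, 1:]" g] deg by simp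
  have "degree (pdiff g) \<le> degree g"
    unfolding pdiff_def using deg by (intro degree_diff_le) auto
  moreover have "coeff (pdiff g) (degree g) = 0"
    using lead by (simp add: pdiff_def)
  ultimately show ?thesis
    using assms by (metis le_neq_implies_less leading_coeff_0_iff)
qed

lemma pdiff_iterate_vanishes:
  fixes g :: "'a::idom poly"
  shows "degree g < i \<Longrightarrow> (pdiff ^^ i) g = 0"
proof (induction i arbitrary: g)
  case 0 then show ?case by simp
next
  case (Suc i)
  show ?case
  proof (cases "pdiff g = 0")
    case True
    have "(pdiff ^^ j) 0 = (0 :: 'a poly)" for j
      by (induction j) (simp_all add: pdiff_def)
    then show ?thesis using True by (simp add: funpow_Suc_right del: funpow.simps)
  next
    case False
    then have "degree (pdiff g) < i" using degree_pdiff_less Suc.prems by fastforce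
    then show ?thesis using Suc.IH by (simp add: funpow_Suc_right del: funpow.simps)
  qed
qed

lemma pdiff_iterate_values:
  fixes g :: "'a::comm_ring_1 poly" and f :: "nat \<Rightarrow> int"
  assumes "\<And>k. poly g (of_nat k) = of_int (f k)"
  shows "poly ((pdiff ^^ i) g) (of_nat k) = of_int ((fdiff ^^ i) f k)"
proof (induction i arbitrary: k)
  case 0 then show ?case using assms by simp
next
  case (Suc i)
  show ?case using Suc[of k] Suc[of "Suc k"]
    by (simp add: poly_pdiff fdiff_def add.commute)
qed

text \<open>In Newton's formula
  for f(p), every term with 0 < i < p has a factor p choose i, divisible by p, and the term
  with i = p vanishes by the degree bound.\<close>

lemma prime_dvd_integer_valued_diff:
  fixes g :: "'a::{idom, ring_char_0} poly" and f :: "nat \<Rightarrow> int"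
  assumes int_valued: "\<And>k. poly g (of_nat k) = of_int (f k)"
    and "prime p" and "degree g < p"
  shows "int p dvd f p - f 0"
proof -
  have "f p = (\<Sum>i\<le>p. of_nat (p choose i) * (fdiff ^^ i) f 0)" by (rule newton_forward)
  also have "\<dots> = f 0 + (\<Sum>i\<in>{1..p}. int (p choose i) * (fdiff ^^ i) f 0)"
    by (simp add: atMost_atLeast0 sum.atLeast_Suc_atMost)
  finally have expand: "f p - f 0 = (\<Sum>i\<in>{1..p}. int (p choose i) * (fdiff ^^ i) f 0)"
    by simp
  have "int p dvd int (p choose i) * (fdiff ^^ i) f 0" if i: "i \<in> {1..p}" for i
  proof (cases "i < p")
    case True
    then have "p dvd (p choose i)" using dvd_choose_prime[of i p] i assms(2) by auto
    then show ?thesis by simp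
  next
    case False
    then have "(pdiff ^^ i) g = 0" using i assms(3) pdiff_iterate_vanishes by simp
    then have "(fdiff ^^ i) f 0 = 0"
      using pdiff_iterate_values[OF int_valued, of i 0] by simp
    then show ?thesis by simp
  qed
  then show ?thesis unfolding expand by (intro dvd_sum) auto
qed

section \<open>Polynomials in X with coefficients in 'a[z]\<close>

text \<open>A polynomial in X whose coefficients are polynomials in z is an element of type
  'a poly poly; ev z Q specialises the coefficient variable z to a value.\<close>

abbreviation ev :: "'a \<Rightarrow> 'a::comm_ring_1 poly poly \<Rightarrow> 'a poly" where
  "ev z Q \<equiv> map_poly (\<lambda>q. poly q z) Q"

lemma ev_mult: "ev z (P * R) = ev z P * ev z R"
proof -
  interpret map_poly_comm_ring_hom "\<lambda>q. poly q z" ..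
  show ?thesis by (rule hom_mult)
qed

lemma ev_prod: "ev z (\<Prod>i\<in>I. f i) = (\<Prod>i\<in>I. ev z (f i))"
proof -
  interpret map_poly_comm_ring_hom "\<lambda>q. poly q z" ..
  show ?thesis by (rule hom_prod)
qed

lemma poly_ev_swap: "poly (poly Q r) z = poly (ev z Q) (poly r z)"
  by (induction Q rule: pCons_induct) (auto simp: map_poly_pCons)

lemma bivariate_eqI:
  fixes P Q :: "'a::idom poly poly"
  assumes "infinite S" and "\<And>z. z \<in> S \<Longrightarrow> ev z P = ev z Q"
  shows "P = Q"
proof (rule poly_eqI)
  fix j
  show "coeff P j = coeff Q j"
  proof (rule ccontr)
    assume "coeff P j \<noteq> coeff Q j"
    then have "finite {z. poly (coeff P j - coeff Q j) z = 0}"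
      by (intro poly_roots_finite) simp
    moreover have "S \<subseteq> {z. poly (coeff P j - coeff Q j) z = 0}"
    proof
      fix z assume "z \<in> S"
      then have "coeff (ev z P) j = coeff (ev z Q) j" using assms(2) by simp
      then show "z \<in> {z. poly (coeff P j - coeff Q j) z = 0}" by (simp add: coeff_map_poly)
    qed
    ultimately show False using assms(1) finite_subset by blast
  qed
qed

lemma infinite_of_nat_image: "infinite S \<Longrightarrow> infinite (of_nat ` S :: 'a::semiring_char_0 set)"
  by (simp add: inj_on_def)

definition coeff_degree_sum :: "'a::zero poly poly \<Rightarrow> nat" where
  "coeff_degree_sum Q = (\<Sum>j\<le>degree Q. degree (coeff Q j))"

lemma degree_poly_const_le:
  fixes Q :: "'a::comm_semiring_1 poly poly"
  shows "degree (poly Q [:c:]) \<le> coeff_degree_sum Q"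
proof -
  have "poly Q [:c:] = (\<Sum>j\<le>degree Q. Polynomial.smult (c ^ j) (coeff Q j))"
    by (simp add: poly_altdef mult.commute poly_const_pow)
  also have "degree \<dots> \<le> coeff_degree_sum Q"
    unfolding coeff_degree_sum_def
    by (intro degree_sum_le order_trans[OF degree_smult_le] member_le_sum) auto
  finally show ?thesis .
qed

abbreviation int_roots_poly :: "int list \<Rightarrow> 'a::comm_ring_1 poly" where
  "int_roots_poly rs \<equiv> (\<Prod>r\<leftarrow>rs. [:- of_int r, 1:])"

lemma poly_int_roots_poly:
  "poly (int_roots_poly rs) (of_int a) = (of_int (\<Prod>r\<leftarrow>rs. a - r) :: 'a::comm_ring_1)"
  by (induction rs) (auto simp: algebra_simps)

lemma prod_list_map_remove1:
  fixes f :: "'b \<Rightarrow> 'a::comm_monoid_mult"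
  shows "x \<in> set xs \<Longrightarrow> (\<Prod>y\<leftarrow>xs. f y) = f x * (\<Prod>y\<leftarrow>remove1 x xs. f y)"
  by (induction xs) (auto simp: mult.left_commute)

lemma int_roots_poly_cancel:
  assumes "int_roots_poly rs = [:- of_int a, 1:] * (G :: 'a::{idom, ring_char_0} poly)"
  shows "a \<in> set rs" and "G = int_roots_poly (remove1 a rs)"
proof -
  have "(of_int (\<Prod>r\<leftarrow>rs. a - r) :: 'a) = 0"
    using arg_cong[OF assms, of "\<lambda>q. poly q (of_int a)"] by (simp add: poly_int_roots_poly)
  then show a: "a \<in> set rs" by (auto simp: prod_list_zero_iff)
  have "[:- of_int a, 1:] * G = [:- of_int a, 1:] * int_roots_poly (remove1 a rs)"
    unfolding assms[symmetric] by (rule prod_list_map_remove1[OF a])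
  then show "G = int_roots_poly (remove1 a rs)"
    by (metis mult_left_cancel pCons_eq_0_iff one_neq_zero)
qed

lemma prime_dvd_prod_list:
  fixes p :: "'a::factorial_semiring"
  assumes "prime p" and "p dvd (\<Prod>x\<leftarrow>xs. h x)"
  shows "\<exists>x\<in>set xs. p dvd h x"
  using assms(2) prime_dvd_prod_mset_iff[OF assms(1), of "mset (map h xs)"]
  by (simp only: prod_mset_prod_list) auto

section \<open>Factorisation into affine factors\<close>

abbreviation affine_factor :: "int \<Rightarrow> int \<Rightarrow> 'a::comm_ring_1 poly poly" where
  "affine_factor \<mu> c \<equiv> [:- [:of_int \<mu>, of_int c:], 1:]"

definition int_split_growth :: "'a::comm_ring_1 poly poly \<Rightarrow> nat \<Rightarrow> int \<Rightarrow> bool" where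
  "int_split_growth Q m C \<longleftrightarrow>
     (\<forall>k::nat. \<exists>rs. length rs = m \<and> ev (of_nat k) Q = int_roots_poly rs
                    \<and> (\<forall>r\<in>set rs. \<bar>r\<bar> \<le> C * (int k + 1)))"

text \<open>For a large prime p, a root l of the specialisation at p agrees modulo p with a root
  \<mu> of the specialisation at 0; writing l = \<mu> + c p, the growth bound confines (c, \<mu>) to a box
  independent of p, and X = \<mu> + c z is a root of Q at z = p.\<close>

lemma prime_yields_affine_root:
  fixes Q :: "'a::{idom, ring_char_0} poly poly" and RS :: "nat \<Rightarrow> int list"
  assumes split: "\<And>k. ev (of_nat k) Q = int_roots_poly (RS k)"
    and bound: "\<And>k r. r \<in> set (RS k) \<Longrightarrow> \<bar>r\<bar> \<le> C * (int k + 1)"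
    and "RS p \<noteq> []" and "prime p" and large: "coeff_degree_sum Q < p"
  shows "\<exists>c \<mu>. \<bar>c\<bar> \<le> 3 * C \<and> \<bar>\<mu>\<bar> \<le> C
                \<and> poly (poly Q [:of_int \<mu>, of_int c:]) (of_nat p) = 0"
proof -
  obtain l where l: "l \<in> set (RS p)" using \<open>RS p \<noteq> []\<close> by (cases "RS p") auto
  define f where "f k = (\<Prod>r\<leftarrow>RS k. l - r)" for k
  have poly_at: "poly (poly Q [:of_int \<mu>, of_int c:]) (of_nat k) = of_int (f k)"
    if "\<mu> + c * int k = l" for \<mu> c k
  proof -
    have "(of_int l :: 'a) = of_int \<mu> + of_int c * of_nat k"
      by (simp flip: that)
    then have "poly (poly Q [:of_int \<mu>, of_int c:]) (of_nat k) = poly (ev (of_nat k) Q) (of_int l)"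
      unfolding poly_ev_swap by (simp add: algebra_simps)
    also have "\<dots> = of_int (f k)"
      unfolding split f_def by (rule poly_int_roots_poly)
    finally show ?thesis .
  qed
  have fp: "f p = 0" unfolding f_def using l by (auto simp: prod_list_zero_iff)
  have "degree (poly Q [:of_int l:]) < p"
    using degree_poly_const_le[of Q] large by (meson le_less_trans)
  with poly_at[of l 0] have "int p dvd f p - f 0"
    by (intro prime_dvd_integer_valued_diff[OF _ \<open>prime p\<close>]) simp_all
  then have "int p dvd f 0" using fp by simp
  then obtain \<mu> where mu: "\<mu> \<in> set (RS 0)" and "int p dvd l - \<mu>"
    using prime_dvd_prod_list[of "int p"] \<open>prime p\<close> unfolding f_def by auto
  then obtain c where c: "l - \<mu> = int p * c" by (auto elim: dvdE)
  have mu_bound: "\<bar>\<mu>\<bar> \<le> C" using bound[OF mu] by simp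
  have c_bound: "\<bar>c\<bar> \<le> 3 * C"
  proof -
    have p1: "int p \<ge> 1" using \<open>prime p\<close> prime_ge_1_nat by auto
    have "int p * \<bar>c\<bar> = \<bar>l - \<mu>\<bar>" using c by (simp add: abs_mult)
    also have "\<dots> \<le> C * (int p + 1) + C" using bound[OF l] mu_bound by linarith
    also have "\<dots> \<le> int p * (3 * C)"
    proof -
      have "1 * C \<le> int p * C" using p1 mu_bound by (intro mult_right_mono) auto
      then show ?thesis by (simp add: algebra_simps)
    qed
    finally show ?thesis using p1 by (simp add: mult_le_cancel_left_pos)
  qed
  have "poly (poly Q [:of_int \<mu>, of_int c:]) (of_nat p) = 0"
    using poly_at[of \<mu> c p] c fp by (simp add: algebra_simps)
  with mu_bound c_bound show ?thesis by blast
qed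

text \<open>Pigeonhole over the infinitely many large primes: one pair (c, \<mu>) from the finite box
  works for infinitely many p, hence X = \<mu> + c z is a root of Q identically in z.\<close>

lemma affine_root_exists:
  fixes Q :: "'a::{idom, ring_char_0} poly poly"
  assumes "int_split_growth Q (Suc m) C"
  shows "\<exists>c \<mu>. poly Q [:of_int \<mu>, of_int c:] = 0"
proof -
  obtain RS where RS: "\<And>k. length (RS k) = Suc m" "\<And>k. ev (of_nat k) Q = int_roots_poly (RS k)"
    "\<And>k r. r \<in> set (RS k) \<Longrightarrow> \<bar>r\<bar> \<le> C * (int k + 1)"
    using assms unfolding int_split_growth_def choice_iff by blast
  have nonempty: "RS k \<noteq> []" for k using RS(1)[of k] by auto
  define Box where "Box = {-(3 * C)..3 * C} \<times> {-C..C}"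
  define Z where "Z = (\<lambda>(c, \<mu>). {p::nat. poly (poly Q [:of_int \<mu>, of_int c:]) (of_nat p) = 0})"
  have "{p. prime p \<and> coeff_degree_sum Q < p} \<subseteq> (\<Union>x\<in>Box. Z x)"
  proof
    fix p assume "p \<in> {p. prime p \<and> coeff_degree_sum Q < p}"
    then obtain c \<mu> where "\<bar>c\<bar> \<le> 3 * C" "\<bar>\<mu>\<bar> \<le> C"
      "poly (poly Q [:of_int \<mu>, of_int c:]) (of_nat p) = 0"
      using prime_yields_affine_root[OF RS(2,3) nonempty] by blast
    then show "p \<in> (\<Union>x\<in>Box. Z x)"
      by (intro UN_I[of "(c, \<mu>)"]) (auto simp: Box_def Z_def abs_le_iff)
  qed
  moreover have "infinite {p. prime p \<and> coeff_degree_sum Q < p}"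
  proof -
    have "{p. prime p} - {..coeff_degree_sum Q} \<subseteq> {p. prime p \<and> coeff_degree_sum Q < p}"
      by auto
    then show ?thesis using primes_infinite Diff_infinite_finite finite_subset
      by (metis finite_atMost)
  qed
  moreover have "finite Box" by (simp add: Box_def)
  ultimately have "\<exists>x\<in>Box. infinite (Z x)"
    by (meson finite_UN finite_subset)
  then obtain c \<mu> where "infinite (Z (c, \<mu>))" by auto
  moreover have "of_nat ` Z (c, \<mu>) \<subseteq> {z. poly (poly Q [:of_int \<mu>, of_int c:]) z = (0::'a)}"
    by (auto simp: Z_def)
  ultimately have "infinite {z. poly (poly Q [:of_int \<mu>, of_int c:]) z = (0::'a)}"
    using infinite_of_nat_image infinite_super by blast
  then have "poly Q [:of_int \<mu>, of_int c:] = 0"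
    using poly_roots_finite by blast
  then show ?thesis by blast
qed

lemma int_split_growth_cancel:
  fixes Q :: "'a::{idom, ring_char_0} poly poly"
  assumes "int_split_growth (affine_factor \<mu> c * Q) (Suc m) C"
  shows "int_split_growth Q m C"
  unfolding int_split_growth_def
proof
  fix k :: nat
  obtain rs where rs: "length rs = Suc m" "ev (of_nat k) (affine_factor \<mu> c * Q) = int_roots_poly rs"
    "\<forall>r\<in>set rs. \<bar>r\<bar> \<le> C * (int k + 1)"
    using assms unfolding int_split_growth_def by blast
  define root where "root = \<mu> + c * int k"
  have "ev (of_nat k) (affine_factor \<mu> c * Q) = [:- of_int root, 1:] * ev (of_nat k) Q"
    unfolding ev_mult root_def by (simp add: map_poly_pCons algebra_simps)
  then have "int_roots_poly rs = [:- of_int root, 1:] * ev (of_nat k) Q"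
    by (simp only: rs(2))
  then have mem: "root \<in> set rs" and cancel: "ev (of_nat k) Q = int_roots_poly (remove1 root rs)"
    by (rule int_roots_poly_cancel)+
  have "length (remove1 root rs) = m"
    using mem rs(1) by (simp add: length_remove1)
  moreover have "\<forall>r\<in>set (remove1 root rs). \<bar>r\<bar> \<le> C * (int k + 1)"
    using rs(3) set_remove1_subset by (metis subsetD)
  ultimately show "\<exists>rs. length rs = m \<and> ev (of_nat k) Q = int_roots_poly rs
              \<and> (\<forall>r\<in>set rs. \<bar>r\<bar> \<le> C * (int k + 1))"
    using cancel by (intro exI[of _ "remove1 root rs"]) simp
qed

theorem int_split_factorization:
  fixes Q :: "'a::{idom, ring_char_0} poly poly"
  assumes "int_split_growth Q m C"
  shows "\<exists>c \<mu> :: nat \<Rightarrow> int. Q = (\<Prod>i<m. affine_factor (\<mu> i) (c i))"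
  using assms
proof (induction m arbitrary: Q)
  case 0
  then have "ev (of_nat k) Q = ev (of_nat k) 1" for k
    by (simp add: int_split_growth_def)
  then have "Q = 1"
    by (intro bivariate_eqI[of "range of_nat"]) (auto intro: infinite_of_nat_image)
  then show ?case by simp
next
  case (Suc m)
  obtain c0 \<mu>0 where "poly Q [:of_int \<mu>0, of_int c0:] = 0"
    using affine_root_exists[OF Suc.prems] by blast
  then have "affine_factor \<mu>0 c0 dvd Q" by (simp add: poly_eq_0_iff_dvd)
  then obtain Q' where Q': "Q = affine_factor \<mu>0 c0 * Q'" by (auto elim: dvdE)
  obtain c \<mu> where IH: "Q' = (\<Prod>i<m. affine_factor (\<mu> i) (c i))"
    using Suc.IH int_split_growth_cancel Suc.prems unfolding Q' by blast
  define c' where "c' = c(m := c0)"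
  define \<mu>' where "\<mu>' = \<mu>(m := \<mu>0)"
  have "(\<Prod>i<m. affine_factor (\<mu>' i) (c' i)) = (\<Prod>i<m. affine_factor (\<mu> i) (c i) :: 'a poly poly)"
    by (rule prod.cong) (auto simp: c'_def \<mu>'_def)
  then have extend: "(\<Prod>i<m. affine_factor (\<mu> i) (c i)) * affine_factor \<mu>0 c0
                     = (\<Prod>i<Suc m. affine_factor (\<mu>' i) (c' i))"
    by (simp add: c'_def \<mu>'_def)
  have "Q = (\<Prod>i<m. affine_factor (\<mu> i) (c i)) * affine_factor \<mu>0 c0"
    unfolding Q' IH by (rule mult.commute)
  also note extend
  finally show ?case by blast
qed

section \<open>Matrix pencils with integer spectra\<close>

definition pencil :: "nat \<Rightarrow> 'a::comm_ring_1 mat \<Rightarrow> 'a mat \<Rightarrow> 'a poly mat" where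
  "pencil n A B = mat n n (\<lambda>(i, j). [:B $$ (i, j), A $$ (i, j):])"

lemma ev_char_poly_pencil:
  fixes A B :: "'a::comm_ring_1 mat"
  assumes "A \<in> carrier_mat n n" and "B \<in> carrier_mat n n"
  shows "ev z (char_poly (pencil n A B)) = char_poly (z \<cdot>\<^sub>m A + B)"
proof -
  have "map_mat (\<lambda>q. poly q z) (pencil n A B) = z \<cdot>\<^sub>m A + B"
    using assms by (intro eq_matI) (auto simp: pencil_def)
  moreover have "pencil n A B \<in> carrier_mat n n" by (simp add: pencil_def)
  ultimately show ?thesis using poly_hom.char_poly_hom[of "pencil n A B" n z] by simp
qed

definition entry_norm_sum :: "nat \<Rightarrow> 'a::real_normed_field mat \<Rightarrow> real" where
  "entry_norm_sum n M = (\<Sum>i<n. \<Sum>j<n. norm (M $$ (i, j)))"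

lemma entry_norm_sum_nonneg: "entry_norm_sum n M \<ge> 0"
  unfolding entry_norm_sum_def by (intro sum_nonneg) auto

text \<open>A crude eigenvalue bound: compare the largest coordinate of an eigenvector with the
  corresponding row of M v = l v.\<close>

lemma eigenvalue_norm_le_entry_norm_sum:
  fixes M :: "'a::real_normed_field mat"
  assumes M: "M \<in> carrier_mat n n" and "eigenvalue M l"
  shows "norm l \<le> entry_norm_sum n M"
proof -
  obtain v where v: "v \<in> carrier_vec n" "v \<noteq> 0\<^sub>v n" "M *\<^sub>v v = l \<cdot>\<^sub>v v"
    using assms unfolding eigenvalue_def eigenvector_def by auto
  have "\<exists>j<n. v $ j \<noteq> 0"
  proof (rule ccontr)
    assume "\<not> ?thesis"
    then have "v = 0\<^sub>v n" using v(1) by (intro eq_vecI) auto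
    with v(2) show False by simp
  qed
  then obtain j0 where "j0 < n" "v $ j0 \<noteq> 0" by blast
  define m where "m = Max ((\<lambda>j. norm (v $ j)) ` {..<n})"
  have "m \<in> (\<lambda>j. norm (v $ j)) ` {..<n}"
    unfolding m_def using \<open>j0 < n\<close> by (intro Max_in) auto
  then obtain i where i: "i < n" "norm (v $ i) = m" by auto
  have max: "norm (v $ j) \<le> norm (v $ i)" if "j < n" for j
    unfolding i(2) m_def using that by (intro Max_ge) auto
  have vi: "norm (v $ i) > 0"
    using max[OF \<open>j0 < n\<close>] \<open>v $ j0 \<noteq> 0\<close>
    by (meson norm_ge_zero norm_le_zero_iff not_le order_trans)
  have "l * v $ i = (M *\<^sub>v v) $ i" using v(1) i by (simp add: v(3))
  also have "\<dots> = (\<Sum>j<n. M $$ (i, j) * v $ j)"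
    using M v(1) i by (simp add: scalar_prod_def lessThan_atLeast0)
  finally have "norm l * norm (v $ i) = norm (\<Sum>j<n. M $$ (i, j) * v $ j)"
    by (simp flip: norm_mult)
  also have "\<dots> \<le> (\<Sum>j<n. norm (M $$ (i, j)) * norm (v $ j))"
    by (rule order_trans[OF norm_sum]) (simp add: norm_mult)
  also have "\<dots> \<le> (\<Sum>j<n. norm (M $$ (i, j))) * norm (v $ i)"
    unfolding sum_distrib_right by (intro sum_mono mult_left_mono max) auto
  finally have "norm l \<le> (\<Sum>j<n. norm (M $$ (i, j)))" using vi by simp
  also have "\<dots> \<le> entry_norm_sum n M"
    unfolding entry_norm_sum_def using i
    by (intro member_le_sum[of i "{..<n}" "\<lambda>i. \<Sum>j<n. norm (M $$ (i, j))"]) (auto intro: sum_nonneg)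
  finally show ?thesis .
qed

lemma entry_norm_sum_pencil:
  fixes A B :: "'a::real_normed_field mat"
  assumes "A \<in> carrier_mat n n" and "B \<in> carrier_mat n n"
  shows "entry_norm_sum n (of_nat k \<cdot>\<^sub>m A + B) \<le> real k * entry_norm_sum n A + entry_norm_sum n B"
proof -
  have "entry_norm_sum n (of_nat k \<cdot>\<^sub>m A + B)
      \<le> (\<Sum>i<n. \<Sum>j<n. real k * norm (A $$ (i, j)) + norm (B $$ (i, j)))"
    unfolding entry_norm_sum_def using assms
    by (intro sum_mono) (simp add: norm_triangle_le norm_mult)
  also have "\<dots> = real k * entry_norm_sum n A + entry_norm_sum n B"
    unfolding entry_norm_sum_def by (simp add: sum.distrib sum_distrib_left)
  finally show ?thesis .
qed

lemma char_poly_integer_spectrum: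
  fixes M :: "complex mat"
  assumes M: "M \<in> carrier_mat n n" and "spectrum M \<subseteq> \<int>"
  shows "\<exists>rs. length rs = n \<and> char_poly M = int_roots_poly rs
               \<and> (\<forall>r\<in>set rs. eigenvalue M (of_int r))"
proof -
  obtain as where as: "char_poly M = (\<Prod>a\<leftarrow>as. [:- a, 1:])" "length as = n"
    using char_poly_factorized[OF M] by blast
  have eig: "eigenvalue M a" if "a \<in> set as" for a
    using that unfolding eigenvalue_root_char_poly[OF M] as(1)
    by (auto simp: poly_prod_list prod_list_zero_iff)
  have int: "of_int \<lfloor>Re a\<rfloor> = a" if "a \<in> set as" for a
    using eig[OF that] assms(2) unfolding spectrum_def by (auto elim!: Ints_cases)
  define rs where "rs = map (\<lambda>a. \<lfloor>Re a\<rfloor>) as"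
  have "map (\<lambda>r. [:- of_int r, 1:]) rs = map (\<lambda>a. [:- a, 1:]) as"
    unfolding rs_def using int by simp
  then have "char_poly M = int_roots_poly rs" using as(1) by simp
  moreover have "\<forall>r\<in>set rs. eigenvalue M (of_int r)"
    using eig int unfolding rs_def by auto
  moreover have "length rs = n" using as(2) by (simp add: rs_def)
  ultimately show ?thesis by blast
qed

lemma pencil_int_split_growth:
  fixes A B :: "complex mat"
  assumes A: "A \<in> carrier_mat n n" and B: "B \<in> carrier_mat n n"
    and spec: "\<forall>k :: nat. spectrum (of_nat k \<cdot>\<^sub>m A + B) \<subseteq> \<int>"
  shows "\<exists>C. int_split_growth (char_poly (pencil n A B)) n C"
proof -
  define S where "S = entry_norm_sum n A + entry_norm_sum n B"
  have "\<exists>rs. length rs = n \<and> ev (of_nat k) (char_poly (pencil n A B)) = int_roots_poly rs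
              \<and> (\<forall>r\<in>set rs. \<bar>r\<bar> \<le> \<lceil>S\<rceil> * (int k + 1))" for k
  proof -
    have M: "of_nat k \<cdot>\<^sub>m A + B \<in> carrier_mat n n" using A B by simp
    obtain rs where rs: "length rs = n" "char_poly (of_nat k \<cdot>\<^sub>m A + B) = int_roots_poly rs"
      "\<forall>r\<in>set rs. eigenvalue (of_nat k \<cdot>\<^sub>m A + B) (of_int r)"
      using char_poly_integer_spectrum[OF M] spec by blast
    have "\<bar>r\<bar> \<le> \<lceil>S\<rceil> * (int k + 1)" if "r \<in> set rs" for r
    proof -
      have "real_of_int \<bar>r\<bar> = norm (complex_of_int r)" by simp
      also have "\<dots> \<le> entry_norm_sum n (of_nat k \<cdot>\<^sub>m A + B)"
        using eigenvalue_norm_le_entry_norm_sum[OF M] rs(3) that by blast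
      also have "\<dots> \<le> real k * entry_norm_sum n A + entry_norm_sum n B"
        by (rule entry_norm_sum_pencil[OF A B])
      also have "\<dots> \<le> S * (real k + 1)"
        using entry_norm_sum_nonneg[of n A] entry_norm_sum_nonneg[of n B]
        by (simp add: S_def algebra_simps)
      also have "\<dots> \<le> real_of_int (\<lceil>S\<rceil> * (int k + 1))"
        by simp
      finally show ?thesis by (simp only: of_int_le_iff)
    qed
    then show ?thesis using rs ev_char_poly_pencil[OF A B] by auto
  qed
  then show ?thesis unfolding int_split_growth_def by blast
qed

section \<open>Homogenisation and the main theorem\<close>

lemma char_poly_smult:
  fixes M :: "'a::field mat"
  assumes M: "M \<in> carrier_mat n n" and d: "d \<noteq> 0"
  shows "char_poly (d \<cdot>\<^sub>m M) = Polynomial.smult (d ^ n) (pcompose (char_poly M) [:0, inverse d:])"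
proof -
  have compose_hom: "comm_ring_hom (\<lambda>q. pcompose q [:0, inverse d:])"
    by unfold_locales (auto simp: pcompose_add pcompose_mult pcompose_1)
  have "char_poly_matrix (d \<cdot>\<^sub>m M)
      = [:d:] \<cdot>\<^sub>m map_mat (\<lambda>q. pcompose q [:0, inverse d:]) (char_poly_matrix M)"
    using M d by (intro eq_matI) (auto simp: char_poly_matrix_def pcompose_pCons)
  then have "char_poly (d \<cdot>\<^sub>m M) = [:d:] ^ n * pcompose (char_poly M) [:0, inverse d:]"
    unfolding char_poly_def using char_poly_matrix_closed[OF M]
    by (simp add: comm_ring_hom.hom_det[OF compose_hom])
  then show ?thesis by (simp add: poly_const_pow)
qed

text \<open>For y \<noteq> 0 this is homogeneity;
  the case y = 0 follows from the identity principle in the variable y.\<close>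

lemma property_L_of_affine_factorization:
  fixes A B :: "complex mat" and a b :: "nat \<Rightarrow> complex"
  assumes A: "A \<in> carrier_mat n n" and B: "B \<in> carrier_mat n n"
    and affine: "\<And>z. char_poly (z \<cdot>\<^sub>m A + B) = (\<Prod>k<n. [:- (a k * z + b k), 1:])"
  shows "property_L n A B"
proof -
  have nonzero: "char_poly (x \<cdot>\<^sub>m A + y \<cdot>\<^sub>m B) = (\<Prod>k<n. [:- (a k * x + b k * y), 1:])"
    if y: "y \<noteq> 0" for x y
  proof -
    have "x \<cdot>\<^sub>m A + y \<cdot>\<^sub>m B = y \<cdot>\<^sub>m ((x / y) \<cdot>\<^sub>m A + B)"
      using A B y by (intro eq_matI) (auto simp: field_simps)
    then have "char_poly (x \<cdot>\<^sub>m A + y \<cdot>\<^sub>m B)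
        = Polynomial.smult (y ^ n) (\<Prod>k<n. pcompose [:- (a k * (x / y) + b k), 1:] [:0, inverse y:])"
      using char_poly_smult[of "(x / y) \<cdot>\<^sub>m A + B" n y] A B y by (simp add: affine pcompose_prod)
    also have "\<dots> = (\<Prod>k<n. Polynomial.smult y (pcompose [:- (a k * (x / y) + b k), 1:] [:0, inverse y:]))"
      by (subst prod_smult) simp
    also have "\<dots> = (\<Prod>k<n. [:- (a k * x + b k * y), 1:])"
      using y by (intro prod.cong) (auto simp: pcompose_pCons field_simps)
    finally show ?thesis .
  qed
  have zero: "char_poly (x \<cdot>\<^sub>m A + 0 \<cdot>\<^sub>m B) = (\<Prod>k<n. [:- (a k * x + b k * 0), 1:])" for x
  proof -
    define R where "R = (\<Prod>k<n. [:- [:a k * x, b k:], 1:])"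
    have xA: "x \<cdot>\<^sub>m A \<in> carrier_mat n n" using A by simp
    have ev_R: "ev s R = (\<Prod>k<n. [:- (a k * x + b k * s), 1:])" for s
      unfolding R_def ev_prod by (simp add: map_poly_pCons algebra_simps)
    have ev_pencil:
      "ev s (char_poly (pencil n B (x \<cdot>\<^sub>m A))) = char_poly (x \<cdot>\<^sub>m A + s \<cdot>\<^sub>m B)" for s
    proof -
      have "s \<cdot>\<^sub>m B + x \<cdot>\<^sub>m A = x \<cdot>\<^sub>m A + s \<cdot>\<^sub>m B"
        using A B by (intro eq_matI) auto
      then show ?thesis using ev_char_poly_pencil[OF B xA, of s] by simp
    qed
    have "char_poly (pencil n B (x \<cdot>\<^sub>m A)) = R"
    proof (rule bivariate_eqI)
      show "infinite (UNIV - {0 :: complex})"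
        by (simp add: infinite_UNIV_char_0)
      show "ev s (char_poly (pencil n B (x \<cdot>\<^sub>m A))) = ev s R" if "s \<in> UNIV - {0}" for s
        using that by (simp add: ev_pencil ev_R nonzero)
    qed
    then show ?thesis using ev_pencil[of 0] ev_R[of 0] by simp
  qed
  have "char_poly (x \<cdot>\<^sub>m A + y \<cdot>\<^sub>m B) = (\<Prod>k<n. [:- (a k * x + b k * y), 1:])" for x y
    using nonzero zero by (cases "y = 0") auto
  then show ?thesis unfolding property_L_def by blast
qed

theorem mainTheorem5:
  fixes n :: nat and A B :: "complex mat"
  assumes "A \<in> carrier_mat n n" and "B \<in> carrier_mat n n"
    and "\<forall>k :: nat. spectrum (of_nat k \<cdot>\<^sub>m A + B) \<subseteq> \<int>"
  shows "property_L n A B"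
proof -
  obtain C where "int_split_growth (char_poly (pencil n A B)) n C"
    using pencil_int_split_growth[OF assms] by blast
  then obtain c \<mu> :: "nat \<Rightarrow> int" where
    factored: "char_poly (pencil n A B) = (\<Prod>i<n. affine_factor (\<mu> i) (c i))"
    using int_split_factorization by blast
  have "char_poly (z \<cdot>\<^sub>m A + B) = (\<Prod>i<n. [:- (of_int (c i) * z + of_int (\<mu> i)), 1:])" for z
  proof -
    have "char_poly (z \<cdot>\<^sub>m A + B) = ev z (char_poly (pencil n A B))"
      by (rule ev_char_poly_pencil[OF assms(1,2), symmetric])
    also have "\<dots> = (\<Prod>i<n. [:- (of_int (c i) * z + of_int (\<mu> i)), 1:])"
      unfolding factored ev_prod by (simp add: map_poly_pCons algebra_simps)
    finally show ?thesis .
  qed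
  then show ?thesis
    by (rule property_L_of_affine_factorization[OF assms(1,2)])
qed

end
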